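(* Let $L$ be the Kirchhoff matrix of a weighted digraph $\Gamma$, let $\varepsilon>0$ be such that $P=I-\varepsilon L$ is row stochastic, and let $P^{\infty}=\lim_{m\to\infty}\frac1m\sum_{i=1}^m P^i$ (Ces\`aro limit). Then $P^{\infty}=\bar J$, the normalized matrix of maximum out-forests of $\Gamma$.
   Context: A weighted digraph $\Gamma$ has vertex set $\{1,\dots,n\}$, no loops, and each arc $j\to i$ ($j\ne i$) has a positive weight $a_{ij}$; $a_{ij}=0$ if there is no such arc. Its Kirchhoff matrix $L=[\ell_{ij}]$ has $\ell_{ij}=-a_{ij}$ for $j\ne i$ and $\ell_{ii}=\sum_{k\ne i}a_{ik}$. An out-forest of $\Gamma$ is a spanning subgraph whose weak components are diverging trees (rooted directed trees with paths from the root to all vertices); a maximum out-forest is one with the maximum number of arcs. The weight of a subgraph is the product of its arc weights. The normalized matrix of maximum out-forests $\bar J$ has $\bar J_{ij}$ equal to the total weight of the maximum out-forests of $\Gamma$ in which $i$ belongs to the tree rooted at $j$, divided by the total weight of all maximum out-forests. *)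

theory Defs
  imports "HOL-Analysis.Analysis"
begin

text \<open>Weighted digraph on the finite vertex type 'n, given by weights a i j \<ge> 0
  (arc j \<rightarrow> i iff a i j > 0, no loops).  An arc j \<rightarrow> i is the pair (j, i).\<close>

definition weighted_digraph :: "('n::finite \<Rightarrow> 'n \<Rightarrow> real) \<Rightarrow> bool" where
  "weighted_digraph a \<longleftrightarrow> (\<forall>i. a i i = 0) \<and> (\<forall>i j. a i j \<ge> 0)"

definition arcs :: "('n::finite \<Rightarrow> 'n \<Rightarrow> real) \<Rightarrow> ('n \<times> 'n) set" where
  "arcs a = {(j, i). j \<noteq> i \<and> a i j > 0}"

definition kirchhoff :: "('n::finite \<Rightarrow> 'n \<Rightarrow> real) \<Rightarrow> real^'n^'n" where
  "kirchhoff a = (\<chi> i j. if i = j then (\<Sum>k\<in>UNIV - {i}. a i k) else - a i j)"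

definition row_stochastic :: "real^'n^'n::finite \<Rightarrow> bool" where
  "row_stochastic P \<longleftrightarrow> (\<forall>i j. P $ i $ j \<ge> 0) \<and> (\<forall>i. (\<Sum>j\<in>UNIV. P $ i $ j) = 1)"

primrec matpow :: "real^'n^'n::finite \<Rightarrow> nat \<Rightarrow> real^'n^'n" where
  "matpow P 0 = mat 1"
| "matpow P (Suc m) = matpow P m ** P"

text \<open>A diverging tree with vertex set C and arc set T: weakly spanning, with |C|-1 arcs
  (hence a tree) and a root from which every vertex of C is reachable.\<close>
definition diverging_tree :: "('n \<times> 'n) set \<Rightarrow> 'n set \<Rightarrow> bool" where
  "diverging_tree T C \<longleftrightarrow> T \<subseteq> C \<times> C \<and> finite C \<and> card T + 1 = card C \<and>
     (\<exists>r\<in>C. \<forall>v\<in>C. (r, v) \<in> T\<^sup>*)"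

definition weak_components :: "('n \<times> 'n) set \<Rightarrow> 'n set set" where
  "weak_components F = UNIV // ((F \<union> F\<inverse>)\<^sup>*)"

definition out_forest :: "('n::finite \<Rightarrow> 'n \<Rightarrow> real) \<Rightarrow> ('n \<times> 'n) set \<Rightarrow> bool" where
  "out_forest a F \<longleftrightarrow> F \<subseteq> arcs a \<and>
     (\<forall>C\<in>weak_components F. diverging_tree (F \<inter> (C \<times> C)) C)"

definition max_out_forests :: "('n::finite \<Rightarrow> 'n \<Rightarrow> real) \<Rightarrow> ('n \<times> 'n) set set" where
  "max_out_forests a = {F. out_forest a F \<and>
     card F = Max (card ` {G. out_forest a G})}"

definition subgraph_weight :: "('n \<Rightarrow> 'n \<Rightarrow> real) \<Rightarrow> ('n \<times> 'n) set \<Rightarrow> real" where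
  "subgraph_weight a F = (\<Prod>(j, i)\<in>F. a i j)"

definition in_tree_rooted_at :: "('n \<times> 'n) set \<Rightarrow> 'n \<Rightarrow> 'n \<Rightarrow> bool" where
  "in_tree_rooted_at F i j \<longleftrightarrow> (\<forall>k. (k, j) \<notin> F) \<and> (j, i) \<in> F\<^sup>*"

definition Jbar :: "('n::finite \<Rightarrow> 'n \<Rightarrow> real) \<Rightarrow> real^'n^'n" where
  "Jbar a = (\<chi> i j.
     (\<Sum>F\<in>{F\<in>max_out_forests a. in_tree_rooted_at F i j}. subgraph_weight a F) /
     (\<Sum>F\<in>max_out_forests a. subgraph_weight a F))"

end

theory Submission
  imports Defs
begin

text \<open>
  The argument works with forests in the combinatorial sense: arc sets in which every vertex
  has at most one incoming arc and which are acyclic.  These are exactly the out-forests of the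
  definitions, so every vertex v has a unique root, and maximum out-forests are the forests of
  maximum size \<nu>.  Let Q(n) be the matrix whose (v, j) entry is the total weight of the n-arc
  forests in which v lies in the tree rooted at j, and \<sigma>(n) the total weight of all n-arc
  forests.  The central identity is the recursion L Q(n) = \<sigma>(n + 1) I - Q(n + 1), proved by
  re-indexing forests through the operation of giving a root a new parent.  Since there are no
  forests with \<nu> + 1 arcs and Jbar = Q(\<nu>) / \<sigma>(\<nu>), it yields L Jbar = 0 and
  I - Jbar = L (Q(\<nu> - 1) / \<sigma>(\<nu>)).  Hence P Jbar = Jbar and I - Jbar = (I - P) Y for some Y;
  for any stochastic P with these two properties the partial sums of the powers telescope to
  m Jbar + (P - P^(m+1)) Y, whose second summand is bounded, so the Cesaro means converge to Jbar.
\<close>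

definition forest :: "('n::finite \<Rightarrow> 'n \<Rightarrow> real) \<Rightarrow> ('n \<times> 'n) set \<Rightarrow> bool" where
  "forest a F \<longleftrightarrow> F \<subseteq> arcs a \<and> (\<forall>u v w. (u, w) \<in> F \<longrightarrow> (v, w) \<in> F \<longrightarrow> u = v) \<and> acyclic F"

definition is_root :: "('n \<times> 'n) set \<Rightarrow> 'n \<Rightarrow> bool" where
  "is_root F r \<longleftrightarrow> (\<forall>k. (k, r) \<notin> F)"

definition root_of :: "('n \<times> 'n) set \<Rightarrow> 'n \<Rightarrow> 'n" where
  "root_of F v = (THE r. (r, v) \<in> F\<^sup>* \<and> is_root F r)"

lemma forest_in_degree: "forest a F \<Longrightarrow> (u, w) \<in> F \<Longrightarrow> (v, w) \<in> F \<Longrightarrow> u = v"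
  unfolding forest_def by blast

text \<open>Since a forest is finite and acyclic it is well founded, so following parents backwards
  terminates and every vertex has a root; by uniqueness of parents the root is unique.\<close>

lemma forest_wf: "forest a (F :: ('n::finite \<times> 'n) set) \<Longrightarrow> wf F"
  unfolding forest_def by (intro finite_acyclic_wf) auto

lemma root_exists:
  assumes "forest a F" shows "\<exists>r. (r, v) \<in> F\<^sup>* \<and> is_root F r"
  using forest_wf[OF assms]
proof (induction v rule: wf_induct_rule)
  case (less v)
  show ?case
  proof (cases "is_root F v")
    case False
    then obtain u where u: "(u, v) \<in> F" unfolding is_root_def by auto
    from less[OF u] obtain r where "(r, u) \<in> F\<^sup>*" "is_root F r" by auto
    with u show ?thesis by (meson rtrancl.rtrancl_into_rtrancl)
  qed auto
qed

lemma root_unique: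
  assumes F: "forest a F"
  shows "(r, v) \<in> F\<^sup>* \<Longrightarrow> is_root F r \<Longrightarrow> (r', v) \<in> F\<^sup>* \<Longrightarrow> is_root F r' \<Longrightarrow> r = r'"
  using forest_wf[OF F]
proof (induction v arbitrary: r r' rule: wf_induct_rule)
  case (less v)
  show ?case
  proof (cases "is_root F v")
    case True
    have "s = v" if "(s, v) \<in> F\<^sup>*" for s
      using that True by (auto simp: is_root_def elim: rtranclE)
    then show ?thesis using less.prems by blast
  next
    case False
    then obtain u where u: "(u, v) \<in> F" unfolding is_root_def by auto
    have "(s, u) \<in> F\<^sup>*" if sv: "(s, v) \<in> F\<^sup>*" and "is_root F s" for s
    proof -
      have "s \<noteq> v" using False that by auto
      then obtain y where "(s, y) \<in> F\<^sup>*" "(y, v) \<in> F" using sv by (auto elim: rtranclE)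
      then show ?thesis using forest_in_degree[OF F u] by metis
    qed
    then show ?thesis using less.IH[OF u] less.prems by blast
  qed
qed

lemma root_of:
  assumes "forest a F" shows "(root_of F v, v) \<in> F\<^sup>* \<and> is_root F (root_of F v)"
proof -
  obtain r where r: "(r, v) \<in> F\<^sup>* \<and> is_root F r" using root_exists[OF assms] by blast
  show ?thesis unfolding root_of_def
    by (rule theI[of _ r]) (use r root_unique[OF assms] in blast)+
qed

lemma root_of_eqI:
  assumes "forest a F" "(r, v) \<in> F\<^sup>*" "is_root F r" shows "root_of F v = r"
  using root_of[OF assms(1)] root_unique[OF assms(1)] assms(2,3) by blast

lemma root_of_root: "forest a F \<Longrightarrow> is_root F r \<Longrightarrow> root_of F r = r"
  by (simp add: root_of_eqI)

lemma root_of_arc: "forest a F \<Longrightarrow> (u, v) \<in> F \<Longrightarrow> root_of F v = root_of F u"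
  by (meson root_of_eqI root_of rtrancl.rtrancl_into_rtrancl)

lemma root_of_connected:
  assumes "forest a F" "(u, v) \<in> (F \<union> F\<inverse>)\<^sup>*" shows "root_of F v = root_of F u"
  using assms(2) by (induction rule: rtrancl_induct) (auto dest: root_of_arc[OF assms(1)])

lemma weak_class_eq:
  assumes F: "forest a F"
  shows "((F \<union> F\<inverse>)\<^sup>*) `` {x} = {v. root_of F v = root_of F x}"
proof (intro equalityI subsetI)
  fix v assume "v \<in> ((F \<union> F\<inverse>)\<^sup>*) `` {x}"
  then show "v \<in> {v. root_of F v = root_of F x}" using root_of_connected[OF F] by fastforce
next
  fix v assume "v \<in> {v. root_of F v = root_of F x}"
  then have eq: "root_of F v = root_of F x" by simp
  have sym: "(u, w) \<in> F\<^sup>* \<Longrightarrow> (w, u) \<in> (F \<union> F\<inverse>)\<^sup>*" for u w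
    by (metis rtrancl_converseI converse_Un rtrancl_mono sup_ge2 subsetD)
  have "(x, root_of F x) \<in> (F \<union> F\<inverse>)\<^sup>*" using sym root_of[OF F, of x] by blast
  moreover have "(root_of F x, v) \<in> (F \<union> F\<inverse>)\<^sup>*"
    using root_of[OF F, of v] eq rtrancl_mono[of F "F \<union> F\<inverse>"] by auto
  ultimately show "v \<in> ((F \<union> F\<inverse>)\<^sup>*) `` {x}" by (meson ImageI rtrancl_trans singletonI)
qed

lemma path_within_component:
  assumes F: "forest a F" and "(u, v) \<in> F\<^sup>*"
  shows "(u, v) \<in> (F \<inter> {w. root_of F w = root_of F u} \<times> {w. root_of F w = root_of F u})\<^sup>*"
  using assms(2)
proof (induction rule: rtrancl_induct)
  case (step y z)
  have "root_of F y = root_of F u"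
    using root_of_connected[OF F] rtrancl_mono[of F "F \<union> F\<inverse>"] step(1) by blast
  moreover have "root_of F z = root_of F y" using root_of_arc[OF F step(2)] .
  ultimately show ?case using step by (auto intro: rtrancl.rtrancl_into_rtrancl)
qed auto

text \<open>Forests and out-forests coincide.  A forest restricted to a weak component is a diverging
  tree rooted at the common root: its arcs correspond bijectively to the non-root vertices.\<close>

lemma forest_imp_out_forest:
  assumes F: "forest a F" shows "out_forest a F"
  unfolding out_forest_def
proof (intro conjI ballI)
  show "F \<subseteq> arcs a" using F by (simp add: forest_def)
  fix C assume "C \<in> weak_components F"
  then obtain x where "C = ((F \<union> F\<inverse>)\<^sup>*) `` {x}" by (auto simp: weak_components_def quotient_def)
  then have C: "C = {v. root_of F v = root_of F x}" using weak_class_eq[OF F] by simp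
  define r where "r = root_of F x"
  have r: "is_root F r" "root_of F r = r"
    using root_of[OF F, of x] root_of_eqI[OF F, of r r] unfolding r_def by auto
  have rC: "r \<in> C" using C r r_def by simp
  have reach: "\<forall>v\<in>C. (r, v) \<in> (F \<inter> C \<times> C)\<^sup>*"
  proof
    fix v assume "v \<in> C"
    then have "(r, v) \<in> F\<^sup>*" using root_of[OF F, of v] C r_def by simp
    from path_within_component[OF F this] show "(r, v) \<in> (F \<inter> C \<times> C)\<^sup>*" using r C r_def by simp
  qed
  have "bij_betw snd (F \<inter> C \<times> C) (C - {r})"
    unfolding bij_betw_def
  proof
    show "inj_on snd (F \<inter> C \<times> C)" using forest_in_degree[OF F] by (auto simp: inj_on_def)
    show "snd ` (F \<inter> C \<times> C) = C - {r}"
    proof (intro equalityI subsetI)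
      fix v assume "v \<in> snd ` (F \<inter> C \<times> C)"
      then show "v \<in> C - {r}" using r(1) by (auto simp: is_root_def)
    next
      fix v assume v: "v \<in> C - {r}"
      then have "root_of F v = r" using C r_def by simp
      with v have "\<not> is_root F v" using root_of_eqI[OF F, of v v] by auto
      then obtain u where u: "(u, v) \<in> F" by (auto simp: is_root_def)
      have "u \<in> C" using root_of_arc[OF F u] \<open>root_of F v = r\<close> C r_def by simp
      then show "v \<in> snd ` (F \<inter> C \<times> C)" using u v by force
    qed
  qed
  then have "card (F \<inter> C \<times> C) = card C - 1"
    using bij_betw_same_card rC by (metis card_Diff_singleton finite)
  moreover have "card C \<ge> 1" using rC card_gt_0_iff[of C] by auto
  ultimately have "card (F \<inter> C \<times> C) + 1 = card C" by simp
  then show "diverging_tree (F \<inter> C \<times> C) C"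
    unfolding diverging_tree_def using reach rC finite by blast
qed

lemma diverging_tree_in_degree:
  assumes dt: "diverging_tree T C" and r: "r \<in> C" "\<forall>v\<in>C. (r, v) \<in> T\<^sup>*"
  shows "(\<forall>u v w. (u, w) \<in> T \<longrightarrow> (v, w) \<in> T \<longrightarrow> u = v) \<and> (\<forall>k. (k, r) \<notin> T)"
proof -
  have TC: "T \<subseteq> C \<times> C" and fC: "finite C" and card: "card T + 1 = card C"
    using dt unfolding diverging_tree_def by auto
  have fT: "finite T" using TC fC by (meson finite_SigmaI finite_subset)
  have heads: "C - {r} \<subseteq> snd ` T"
  proof
    fix v assume v: "v \<in> C - {r}"
    then have "(r, v) \<in> T\<^sup>*" "r \<noteq> v" using r by auto
    then obtain y where "(y, v) \<in> T" by (auto elim: rtranclE)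
    then show "v \<in> snd ` T" by force
  qed
  have "r \<notin> snd ` T"
  proof
    assume "r \<in> snd ` T"
    then have "C \<subseteq> snd ` T" using heads by auto
    then have "card C \<le> card T" by (meson card_image_le card_mono fT finite_imageI order_trans)
    then show False using card by simp
  qed
  then have eq: "snd ` T = C - {r}" using heads TC by auto
  then have "card (snd ` T) = card T" using card r(1) fC by simp
  then have "inj_on snd T" using eq_card_imp_inj_on[OF fT] by blast
  then show ?thesis using \<open>r \<notin> snd ` T\<close> unfolding inj_on_def by force
qed

text \<open>In a relation with in-degree at most one, no vertex reachable from a source lies on a
  cycle: a cycle through w must enter w along the unique arc of the path to w.\<close>

lemma reachable_from_source_not_on_cycle:
  assumes indeg: "\<And>u v w. (u, w) \<in> F \<Longrightarrow> (v, w) \<in> F \<Longrightarrow> u = v"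
    and source: "\<forall>k. (k, r) \<notin> F" and "(r, w) \<in> F\<^sup>*"
  shows "(w, w) \<notin> F\<^sup>+"
  using assms(3)
proof (induction rule: rtrancl_induct)
  case base
  show ?case
  proof
    assume "(r, r) \<in> F\<^sup>+"
    then obtain y where "(y, r) \<in> F" using tranclD2 by metis
    then show False using source by blast
  qed
next
  case (step u w)
  show ?case
  proof
    assume "(w, w) \<in> F\<^sup>+"
    then obtain y where y: "(w, y) \<in> F\<^sup>*" "(y, w) \<in> F" using tranclD2 by metis
    then have "y = u" using indeg step(2) by blast
    then have "(u, u) \<in> F\<^sup>+" using y step(2) by (meson rtrancl_into_trancl2)
    then show False using step(3) by blast
  qed
qed

text \<open>Conversely, an out-forest has in-degree at most one (inside each component tree) and is
  acyclic, since every vertex is reachable from the root of its component tree.\<close>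

lemma out_forest_imp_forest:
  assumes of: "out_forest a F" shows "forest a F"
proof -
  define C where "C x = ((F \<union> F\<inverse>)\<^sup>*) `` {x}" for x
  define T where "T x = F \<inter> C x \<times> C x" for x
  have tree: "diverging_tree (T x) (C x)" for x
    using of unfolding out_forest_def weak_components_def quotient_def T_def C_def by blast
  have self: "x \<in> C x" for x unfolding C_def by simp
  have closed: "y \<in> C x" if "(y, w) \<in> F \<or> (w, y) \<in> F" "w \<in> C x" for x y w
  proof -
    have "(w, y) \<in> (F \<union> F\<inverse>)\<^sup>*" using that(1) by auto
    then show ?thesis using that(2) unfolding C_def by (meson Image_singleton_iff rtrancl_trans)
  qed
  have in_tree: "(y, w) \<in> T x" if "(y, w) \<in> F" "w \<in> C x" for x y w
    using closed[of y w x] that unfolding T_def by blast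
  have tree_facts: "\<exists>r\<in>C x. (\<forall>v\<in>C x. (r, v) \<in> (T x)\<^sup>*) \<and> (\<forall>k. (k, r) \<notin> T x)
      \<and> (\<forall>u v w. (u, w) \<in> T x \<longrightarrow> (v, w) \<in> T x \<longrightarrow> u = v)" for x
  proof -
    obtain r where r: "r \<in> C x" "\<forall>v\<in>C x. (r, v) \<in> (T x)\<^sup>*"
      using tree[of x] unfolding diverging_tree_def by blast
    then show ?thesis using diverging_tree_in_degree[OF tree[of x] r] by blast
  qed
  have indeg: "u = v" if "(u, w) \<in> F" "(v, w) \<in> F" for u v w
  proof -
    have "\<forall>u v w'. (u, w') \<in> T w \<longrightarrow> (v, w') \<in> T w \<longrightarrow> u = v" using tree_facts[of w] by blast
    then show ?thesis using in_tree[OF that(1) self] in_tree[OF that(2) self] by blast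
  qed
  have "(x, x) \<notin> F\<^sup>+" for x
  proof -
    obtain r where r: "r \<in> C x" "\<forall>v\<in>C x. (r, v) \<in> (T x)\<^sup>*" "\<forall>k. (k, r) \<notin> T x"
      using tree_facts[of x] by blast
    have "T x \<subseteq> F" unfolding T_def by blast
    then have "(r, x) \<in> F\<^sup>*" using r(2) self rtrancl_mono by blast
    moreover have "\<forall>k. (k, r) \<notin> F" using r(1,3) in_tree[of _ r x] by blast
    ultimately show ?thesis by (intro reachable_from_source_not_on_cycle[OF indeg])
  qed
  moreover have "F \<subseteq> arcs a" using of by (simp add: out_forest_def)
  ultimately show ?thesis using indeg unfolding forest_def acyclic_def by blast
qed

lemma out_forest_iff_forest: "out_forest a F \<longleftrightarrow> forest a F"
  using out_forest_imp_forest forest_imp_out_forest by blast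

lemma forest_subset: "forest a F \<Longrightarrow> G \<subseteq> F \<Longrightarrow> forest a G"
  unfolding forest_def by (metis acyclic_subset subset_trans subsetD)

lemma forest_insert:
  assumes F: "forest a F" and i: "is_root F i" and p: "(p, i) \<in> arcs a" "(i, p) \<notin> F\<^sup>*"
  shows "forest a (insert (p, i) F)"
proof -
  have "(u, w) \<in> insert (p, i) F \<Longrightarrow> (v, w) \<in> insert (p, i) F \<Longrightarrow> u = v" for u v w
    using forest_in_degree[OF F] i by (cases "w = i") (auto simp: is_root_def)
  moreover have "insert (p, i) F \<subseteq> arcs a" "acyclic (insert (p, i) F)"
    using F p unfolding forest_def by auto
  ultimately show ?thesis unfolding forest_def by blast
qed

lemma root_of_insert:
  assumes F: "forest a F" and i: "is_root F i" and p: "(p, i) \<in> arcs a" "(i, p) \<notin> F\<^sup>*"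
  shows "root_of (insert (p, i) F) v = (if (i, v) \<in> F\<^sup>* then root_of F p else root_of F v)"
proof -
  let ?F' = "insert (p, i) F"
  have F': "forest a ?F'" using forest_insert[OF assms] .
  have mono: "F\<^sup>* \<subseteq> ?F'\<^sup>*" by (simp add: rtrancl_mono subset_insertI)
  have root: "is_root ?F' r" if "is_root F r" "r \<noteq> i" for r
    using that by (auto simp: is_root_def)
  show ?thesis
  proof (cases "(i, v) \<in> F\<^sup>*")
    case True
    have rp: "(root_of F p, p) \<in> F\<^sup>*" "is_root F (root_of F p)" using root_of[OF F] by auto
    then have "root_of F p \<noteq> i" using p(2) by auto
    moreover have "(root_of F p, v) \<in> ?F'\<^sup>*"
      using rp(1) True mono by (meson insertI1 rtrancl.rtrancl_into_rtrancl rtrancl_trans subsetD)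
    ultimately show ?thesis using root_of_eqI[OF F'] root rp(2) True by simp
  next
    case False
    have rv: "(root_of F v, v) \<in> F\<^sup>*" "is_root F (root_of F v)" using root_of[OF F] by auto
    then have "root_of F v \<noteq> i" using False by auto
    then show ?thesis using root_of_eqI[OF F'] root rv mono False by auto
  qed
qed

definition rooted_forests :: "('n::finite \<Rightarrow> 'n \<Rightarrow> real) \<Rightarrow> 'n \<Rightarrow> nat \<Rightarrow> ('n \<times> 'n) set set" where
  "rooted_forests a i n = {F. forest a F \<and> is_root F i \<and> card F + 1 = n}"

definition nonrooted_forests :: "('n::finite \<Rightarrow> 'n \<Rightarrow> real) \<Rightarrow> 'n \<Rightarrow> nat \<Rightarrow> ('n \<times> 'n) set set" where
  "nonrooted_forests a i n = {H. forest a H \<and> card H = n \<and> \<not> is_root H i}"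

definition new_parents :: "('n \<Rightarrow> 'n \<Rightarrow> real) \<Rightarrow> 'n \<Rightarrow> ('n \<times> 'n) set \<Rightarrow> 'n set" where
  "new_parents a i F = {p. (i, p) \<notin> F\<^sup>* \<and> a i p > 0}"

lemma new_parents_arc: "p \<in> new_parents a i F \<Longrightarrow> (p, i) \<in> arcs a \<and> (i, p) \<notin> F\<^sup>*"
  by (auto simp: new_parents_def arcs_def)

lemma remove_parent_arc:
  assumes H: "forest a H" and q: "(q, i) \<in> H"
  shows "forest a (H - {(q, i)}) \<and> is_root (H - {(q, i)}) i
    \<and> q \<in> new_parents a i (H - {(q, i)})"
proof -
  let ?F = "H - {(q, i)}"
  have "is_root ?F i" unfolding is_root_def using forest_in_degree[OF H _ q] by blast
  moreover have "(i, q) \<notin> ?F\<^sup>*"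
  proof
    assume "(i, q) \<in> ?F\<^sup>*"
    then have "(i, q) \<in> H\<^sup>*" by (meson Diff_subset rtrancl_mono subsetD)
    then have "(i, i) \<in> H\<^sup>+" using q by (meson rtrancl_into_trancl1)
    then show False using H unfolding forest_def acyclic_def by simp
  qed
  moreover have "(q, i) \<in> arcs a" using H q unfolding forest_def by (meson subsetD)
  ultimately show ?thesis using forest_subset[OF H] by (auto simp: new_parents_def arcs_def)
qed

text \<open>Every n-arc forest in which i has a parent p arises uniquely by adding the arc (p, i) to
  an (n - 1)-arc forest in which i is a root; hence sums over such forests can be re-indexed.\<close>

lemma sum_nonrooted_forests:
  fixes g :: "('n::finite \<times> 'n) set \<Rightarrow> real"
  shows "(\<Sum>H\<in>nonrooted_forests a i n. g H)
       = (\<Sum>F\<in>rooted_forests a i n. \<Sum>p\<in>new_parents a i F. g (insert (p, i) F))"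
proof -
  define parent where "parent H = (THE p. (p, i) \<in> H)" for H :: "('n \<times> 'n) set"
  have "(\<Sum>F\<in>rooted_forests a i n. \<Sum>p\<in>new_parents a i F. g (insert (p, i) F))
      = (\<Sum>(F, p)\<in>(SIGMA F:rooted_forests a i n. new_parents a i F). g (insert (p, i) F))"
    by (rule sum.Sigma) auto
  also have "\<dots> = (\<Sum>H\<in>nonrooted_forests a i n. g H)"
  proof (rule sum.reindex_bij_witness[where j = "\<lambda>(F, p). insert (p, i) F"
        and i = "\<lambda>H. (H - {(parent H, i)}, parent H)"])
    fix Fp assume "Fp \<in> (SIGMA F:rooted_forests a i n. new_parents a i F)"
    then obtain F p where Fp: "Fp = (F, p)" and "F \<in> rooted_forests a i n" "p \<in> new_parents a i F"
      by auto
    then have F: "forest a F" "is_root F i" "card F + 1 = n"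
      and p: "(p, i) \<in> arcs a" "(i, p) \<notin> F\<^sup>*"
      using new_parents_arc unfolding rooted_forests_def by auto
    have notin: "(p, i) \<notin> F" using F(2) by (auto simp: is_root_def)
    have "parent (insert (p, i) F) = p"
      unfolding parent_def using F(2) by (auto simp: is_root_def)
    then show "(\<lambda>H. (H - {(parent H, i)}, parent H)) ((\<lambda>(F, p). insert (p, i) F) Fp) = Fp"
      using notin Fp by auto
    show "(\<lambda>(F, p). insert (p, i) F) Fp \<in> nonrooted_forests a i n"
      using forest_insert[OF F(1,2) p] notin F(3) Fp
      by (auto simp: is_root_def nonrooted_forests_def)
  next
    fix H assume "H \<in> nonrooted_forests a i n"
    then have H: "forest a H" "card H = n" and "\<not> is_root H i"
      by (auto simp: nonrooted_forests_def)
    then obtain q where q: "(q, i) \<in> H" by (auto simp: is_root_def)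
    have q_parent: "parent H = q"
      unfolding parent_def using q forest_in_degree[OF H(1) _ q] by blast
    then show "(\<lambda>(F, p). insert (p, i) F) ((\<lambda>H. (H - {(parent H, i)}, parent H)) H) = H"
      using q by auto
    let ?F = "H - {(q, i)}"
    have "card ?F + 1 = n" using card.remove[of H "(q, i)"] H(2) q by simp
    then have "?F \<in> rooted_forests a i n"
      using remove_parent_arc[OF H(1) q] by (simp add: rooted_forests_def)
    moreover have "q \<in> new_parents a i ?F" using remove_parent_arc[OF H(1) q] by blast
    ultimately show "(\<lambda>H. (H - {(parent H, i)}, parent H)) H
        \<in> (SIGMA F:rooted_forests a i n. new_parents a i F)"
      using q_parent by simp
  qed auto
  finally show ?thesis by simp
qed

definition forests_of_size :: "('n::finite \<Rightarrow> 'n \<Rightarrow> real) \<Rightarrow> nat \<Rightarrow> ('n \<times> 'n) set set" where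
  "forests_of_size a n = {F. forest a F \<and> card F = n}"

definition root_indicator :: "('n \<times> 'n) set \<Rightarrow> 'n \<Rightarrow> 'n \<Rightarrow> real" where
  "root_indicator F v j = (if root_of F v = j then 1 else 0)"

definition rooted_weight :: "('n::finite \<Rightarrow> 'n \<Rightarrow> real) \<Rightarrow> nat \<Rightarrow> 'n \<Rightarrow> 'n \<Rightarrow> real" where
  "rooted_weight a n v j = (\<Sum>F\<in>forests_of_size a n. subgraph_weight a F * root_indicator F v j)"

definition forest_weight :: "('n::finite \<Rightarrow> 'n \<Rightarrow> real) \<Rightarrow> nat \<Rightarrow> real" where
  "forest_weight a n = (\<Sum>F\<in>forests_of_size a n. subgraph_weight a F)"

lemma sum_forests_of_size_split:
  "(\<Sum>F\<in>forests_of_size a n. g F)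
     = (\<Sum>F\<in>rooted_forests a i (Suc n). g F) + (\<Sum>F\<in>nonrooted_forests a i n. g F)"
proof -
  have "forests_of_size a n = rooted_forests a i (Suc n) \<union> nonrooted_forests a i n"
    "rooted_forests a i (Suc n) \<inter> nonrooted_forests a i n = {}"
    by (auto simp: forests_of_size_def rooted_forests_def nonrooted_forests_def)
  then show ?thesis by (simp add: sum.union_disjoint)
qed

lemma weight_insert:
  "(p, i) \<notin> F \<Longrightarrow>
    subgraph_weight a (insert (p, i) (F :: ('n::finite \<times> 'n) set)) = a i p * subgraph_weight a F"
  unfolding subgraph_weight_def by simp

lemma double_sum_antisymmetric:
  fixes x f :: "'a \<Rightarrow> real"
  shows "(\<Sum>p\<in>U. \<Sum>l\<in>U. x p * x l * (f p - f l)) = 0"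
proof -
  have "(\<Sum>p\<in>U. \<Sum>l\<in>U. x p * x l * f l) = (\<Sum>l\<in>U. \<Sum>p\<in>U. x p * x l * f l)"
    by (rule sum.swap)
  also have "\<dots> = (\<Sum>p\<in>U. \<Sum>l\<in>U. x p * x l * f p)"
    by (simp add: mult.commute mult.left_commute)
  finally show ?thesis by (simp add: right_diff_distrib sum_subtractf)
qed

lemma sum_new_parents:
  assumes "weighted_digraph a"
  shows "(\<Sum>p\<in>new_parents a i F. a i p * g p) = (\<Sum>p\<in>{p. (i, p) \<notin> F\<^sup>*}. a i p * g p)"
proof (rule sum.mono_neutral_left)
  show "\<forall>p\<in>{p. (i, p) \<notin> F\<^sup>*} - new_parents a i F. a i p * g p = 0"
  proof
    fix p assume "p \<in> {p. (i, p) \<notin> F\<^sup>*} - new_parents a i F"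
    then have "\<not> a i p > 0" by (auto simp: new_parents_def)
    moreover have "a i p \<ge> 0" using assms by (simp add: weighted_digraph_def)
    ultimately show "a i p * g p = 0" by simp
  qed
qed (auto simp: new_parents_def)

lemma sum_outside:
  fixes c h :: "'n::finite \<Rightarrow> real"
  shows "(\<Sum>l\<in>UNIV. c l * (if l \<in> D then 0 else h l)) = (\<Sum>l\<in>-D. c l * h l)"
  by (simp add: sum.If_cases if_distrib Compl_eq)

lemma root_indicator_insert:
  assumes "forest a F" "is_root F i" "(p, i) \<in> arcs a" "(i, p) \<notin> F\<^sup>*"
  shows "root_indicator (insert (p, i) F) v j
       = (if (i, v) \<in> F\<^sup>* then root_indicator F p j else root_indicator F v j)"
  unfolding root_indicator_def using root_of_insert[OF assms, of v] by simp

text \<open>The contribution of a single forest F to the (i, j) entry of the product of the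
  Kirchhoff matrix with the forest matrix.\<close>

definition kirchhoff_term :: "('n::finite \<Rightarrow> 'n \<Rightarrow> real) \<Rightarrow> ('n \<times> 'n) set \<Rightarrow> 'n \<Rightarrow> 'n \<Rightarrow> real" where
  "kirchhoff_term a F i j =
     subgraph_weight a F * (\<Sum>l\<in>UNIV. a i l * (root_indicator F i j - root_indicator F l j))"

text \<open>If i has a parent, the terms cancel in pairs: summing over all possible parents p of the
  root i of F gives a double sum antisymmetric in (p, l).\<close>

lemma kirchhoff_terms_cancel:
  assumes wd: "weighted_digraph a" and F: "forest a F" "is_root F i"
  shows "(\<Sum>p\<in>new_parents a i F. kirchhoff_term a (insert (p, i) F) i j) = 0"
proof -
  let ?U = "{p. (i, p) \<notin> F\<^sup>*}" and ?D = "{p. (i, p) \<in> F\<^sup>*}"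
  let ?ind = "root_indicator F"
  have Compl_D: "-?D = ?U" by auto
  have inserted_term: "kirchhoff_term a (insert (p, i) F) i j
        = a i p * (subgraph_weight a F * (\<Sum>l\<in>?U. a i l * (?ind p j - ?ind l j)))"
    if p: "p \<in> new_parents a i F" for p
  proof -
    have pa: "(p, i) \<in> arcs a" "(i, p) \<notin> F\<^sup>*" using new_parents_arc[OF p] by auto
    have "(p, i) \<notin> F" using F(2) by (auto simp: is_root_def)
    moreover have "(\<Sum>l\<in>UNIV. a i l *
          (root_indicator (insert (p, i) F) i j - root_indicator (insert (p, i) F) l j))
        = (\<Sum>l\<in>UNIV. a i l * (if l \<in> ?D then 0 else ?ind p j - ?ind l j))"
      by (rule sum.cong) (auto simp: root_indicator_insert[OF F pa])
    ultimately show ?thesis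
      unfolding sum_outside Compl_D kirchhoff_term_def by (simp add: weight_insert)
  qed
  have "(\<Sum>p\<in>new_parents a i F. kirchhoff_term a (insert (p, i) F) i j)
      = (\<Sum>p\<in>?U. a i p * (subgraph_weight a F * (\<Sum>l\<in>?U. a i l * (?ind p j - ?ind l j))))"
    using inserted_term sum_new_parents[OF wd] by (simp cong: sum.cong)
  also have "\<dots> = subgraph_weight a F * (\<Sum>p\<in>?U. \<Sum>l\<in>?U. a i p * a i l * (?ind p j - ?ind l j))"
    by (simp add: sum_distrib_left mult.assoc mult.left_commute)
  also have "\<dots> = 0" by (simp add: double_sum_antisymmetric)
  finally show ?thesis .
qed

lemma kirchhoff_term_root:
  assumes wd: "weighted_digraph a" and F: "forest a F" "is_root F i"
  shows "kirchhoff_term a F i j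
       = (\<Sum>l\<in>new_parents a i F. subgraph_weight a (insert (l, i) F) *
            ((if i = j then 1 else 0) - root_indicator (insert (l, i) F) i j))"
proof -
  let ?U = "{p. (i, p) \<notin> F\<^sup>*}" and ?D = "{p. (i, p) \<in> F\<^sup>*}"
  let ?d = "(if i = j then 1 else 0) :: real"
  have Compl_D: "-?D = ?U" by auto
  have tree_of_i: "root_indicator F v j = ?d" if "(i, v) \<in> F\<^sup>*" for v
    unfolding root_indicator_def using root_of_eqI[OF F(1) that F(2)] by simp
  have "(\<Sum>l\<in>UNIV. a i l * (root_indicator F i j - root_indicator F l j))
      = (\<Sum>l\<in>UNIV. a i l * (if l \<in> ?D then 0 else ?d - root_indicator F l j))"
    by (rule sum.cong) (auto simp: tree_of_i)
  also have "\<dots> = (\<Sum>l\<in>new_parents a i F. a i l * (?d - root_indicator F l j))"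
    unfolding sum_outside Compl_D by (rule sum_new_parents[OF wd, symmetric])
  finally have "kirchhoff_term a F i j
      = (\<Sum>l\<in>new_parents a i F. subgraph_weight a F * (a i l * (?d - root_indicator F l j)))"
    by (simp add: kirchhoff_term_def sum_distrib_left)
  also have "\<dots> = (\<Sum>l\<in>new_parents a i F. subgraph_weight a (insert (l, i) F) *
            (?d - root_indicator (insert (l, i) F) i j))"
  proof (rule sum.cong)
    fix l assume l: "l \<in> new_parents a i F"
    have pa: "(l, i) \<in> arcs a" "(i, l) \<notin> F\<^sup>*" using new_parents_arc[OF l] by auto
    have "(l, i) \<notin> F" using F(2) by (auto simp: is_root_def)
    then show "subgraph_weight a F * (a i l * (?d - root_indicator F l j))
        = subgraph_weight a (insert (l, i) F) * (?d - root_indicator (insert (l, i) F) i j)"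
      using root_indicator_insert[OF F pa, of i j] by (simp add: weight_insert)
  qed simp
  finally show ?thesis .
qed

text \<open>Summing the terms over all n-arc forests: only the forests with i as a root survive, and
  they produce the (n + 1)-arc forests in which i has a parent.\<close>

lemma kirchhoff_rooted_weight:
  assumes wd: "weighted_digraph a"
  shows "(\<Sum>l\<in>UNIV. a i l * (rooted_weight a n i j - rooted_weight a n l j))
       = (\<Sum>H\<in>nonrooted_forests a i (Suc n).
            subgraph_weight a H * ((if i = j then 1 else 0) - root_indicator H i j))"
proof -
  have "(\<Sum>l\<in>UNIV. a i l * (rooted_weight a n i j - rooted_weight a n l j))
      = (\<Sum>l\<in>UNIV. \<Sum>F\<in>forests_of_size a n. a i l * (subgraph_weight a F *
            (root_indicator F i j - root_indicator F l j)))"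
    unfolding rooted_weight_def
    by (simp add: sum_subtractf[symmetric] right_diff_distrib sum_distrib_left)
  also have "\<dots> = (\<Sum>F\<in>forests_of_size a n. kirchhoff_term a F i j)"
    unfolding kirchhoff_term_def
    by (subst sum.swap) (simp add: sum_distrib_left mult.left_commute)
  also have "\<dots> = (\<Sum>F\<in>rooted_forests a i (Suc n). kirchhoff_term a F i j)"
  proof -
    have "(\<Sum>F\<in>nonrooted_forests a i n. kirchhoff_term a F i j) = 0"
      using kirchhoff_terms_cancel[OF wd]
      by (simp add: sum_nonrooted_forests rooted_forests_def)
    then show ?thesis by (simp add: sum_forests_of_size_split[of _ a n i])
  qed
  also have "\<dots> = (\<Sum>F\<in>rooted_forests a i (Suc n). \<Sum>l\<in>new_parents a i F.
            subgraph_weight a (insert (l, i) F) *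
              ((if i = j then 1 else 0) - root_indicator (insert (l, i) F) i j))"
    by (rule sum.cong) (simp_all add: kirchhoff_term_root[OF wd] rooted_forests_def)
  also have "\<dots> = (\<Sum>H\<in>nonrooted_forests a i (Suc n).
            subgraph_weight a H * ((if i = j then 1 else 0) - root_indicator H i j))"
    by (rule sum_nonrooted_forests[symmetric])
  finally show ?thesis .
qed

text \<open>The forest recursion, entrywise: Q(n + 1) + L Q(n) = \<sigma>(n + 1) I.  The (n + 1)-arc forests
  in which i is a root contribute \<delta>(i, j) to Q(n + 1), the others are compensated by L Q(n).\<close>

lemma rooted_weight_recursion:
  assumes wd: "weighted_digraph a"
  shows "rooted_weight a (Suc n) i j
         + (\<Sum>l\<in>UNIV. a i l * (rooted_weight a n i j - rooted_weight a n l j))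
       = (if i = j then forest_weight a (Suc n) else 0)"
proof -
  let ?w = "subgraph_weight a"
  let ?d = "(if i = j then 1 else 0) :: real"
  let ?R = "rooted_forests a i (Suc (Suc n))" and ?N = "nonrooted_forests a i (Suc n)"
  have "(\<Sum>H\<in>?R. ?w H * root_indicator H i j) = (\<Sum>H\<in>?R. ?w H * ?d)"
    by (intro sum.cong) (auto simp: rooted_forests_def root_indicator_def root_of_root)
  then have "rooted_weight a (Suc n) i j
      = (\<Sum>H\<in>?R. ?w H * ?d) + (\<Sum>H\<in>?N. ?w H * root_indicator H i j)"
    unfolding rooted_weight_def by (simp add: sum_forests_of_size_split[of _ a "Suc n" i])
  moreover have "forest_weight a (Suc n) = (\<Sum>H\<in>?R. ?w H) + (\<Sum>H\<in>?N. ?w H)"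
    unfolding forest_weight_def by (rule sum_forests_of_size_split)
  ultimately show ?thesis
    unfolding kirchhoff_rooted_weight[OF wd]
    by (auto simp: sum.distrib[symmetric] sum_distrib_right[symmetric] algebra_simps)
qed

lemma kirchhoff_row:
  assumes "weighted_digraph a"
  shows "(\<Sum>l\<in>UNIV. kirchhoff a $ i $ l * x l) = (\<Sum>l\<in>UNIV. a i l * (x i - x l))"
proof -
  have "a i i = 0" using assms by (simp add: weighted_digraph_def)
  then have "(\<Sum>l\<in>UNIV. a i l * (x i - x l)) = (\<Sum>l\<in>UNIV - {i}. a i l * x i - a i l * x l)"
    using sum.remove[of UNIV i "\<lambda>l. a i l * (x i - x l)"] by (simp add: right_diff_distrib)
  also have "\<dots> = kirchhoff a $ i $ i * x i + (\<Sum>l\<in>UNIV - {i}. kirchhoff a $ i $ l * x l)"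
    by (simp add: kirchhoff_def sum_subtractf sum_distrib_right sum_negf)
  also have "\<dots> = (\<Sum>l\<in>UNIV. kirchhoff a $ i $ l * x l)"
    using sum.remove[of UNIV i "\<lambda>l. kirchhoff a $ i $ l * x l"] by simp
  finally show ?thesis by simp
qed

definition forest_matrix :: "('n::finite \<Rightarrow> 'n \<Rightarrow> real) \<Rightarrow> nat \<Rightarrow> real^'n^'n" where
  "forest_matrix a n = (\<chi> i j. rooted_weight a n i j)"

lemma kirchhoff_forest_matrix:
  assumes "weighted_digraph a"
  shows "kirchhoff a ** forest_matrix a n
       = forest_weight a (Suc n) *\<^sub>R mat 1 - forest_matrix a (Suc n)"
proof -
  have "(kirchhoff a ** forest_matrix a n) $ i $ j
      = (if i = j then forest_weight a (Suc n) else 0) - rooted_weight a (Suc n) i j" for i j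
    using rooted_weight_recursion[OF assms, of n i j]
    by (simp add: matrix_matrix_mult_def forest_matrix_def kirchhoff_row[OF assms])
  then show ?thesis by (simp add: vec_eq_iff forest_matrix_def mat_def)
qed

lemma forest_empty: "forest a {}"
  by (simp add: forest_def acyclic_def)

lemma forest_matrix_0: "forest_matrix a 0 = mat 1" and forest_weight_0: "forest_weight a 0 = 1"
proof -
  have forests: "forests_of_size a 0 = {{}}"
    using forest_empty by (auto simp: forests_of_size_def)
  have "root_of {} v = v" for v :: 'a
    using root_of_root[OF forest_empty] by (simp add: is_root_def)
  then show "forest_matrix a 0 = mat 1" "forest_weight a 0 = 1"
    by (simp_all add: forest_matrix_def rooted_weight_def forest_weight_def forests
        root_indicator_def subgraph_weight_def mat_def vec_eq_iff)
qed

definition max_forest_size :: "('n::finite \<Rightarrow> 'n \<Rightarrow> real) \<Rightarrow> nat" where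
  "max_forest_size a = Max (card ` {G. forest a G})"

lemma max_forests_nonempty: "forests_of_size a (max_forest_size a) \<noteq> {}"
proof -
  have "max_forest_size a \<in> card ` {G. forest a G}" unfolding max_forest_size_def
    by (rule Max_in) (use forest_empty in auto)
  then show ?thesis by (auto simp: forests_of_size_def)
qed

lemma no_larger_forests: "forests_of_size a (Suc (max_forest_size a)) = {}"
proof -
  have "card F \<le> max_forest_size a" if "forest a F" for F
    unfolding max_forest_size_def by (rule Max_ge) (use that in auto)
  then show ?thesis by (fastforce simp: forests_of_size_def)
qed

lemma forest_weight_max_pos: "forest_weight a (max_forest_size a) > 0"
proof -
  have "subgraph_weight a F > 0" if "forest a F" for F
    using that unfolding subgraph_weight_def forest_def by (intro prod_pos) (auto simp: arcs_def)
  then show ?thesis unfolding forest_weight_def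
    using max_forests_nonempty by (intro sum_pos) (auto simp: forests_of_size_def)
qed

lemma in_tree_rooted_at_iff: "forest a F \<Longrightarrow> in_tree_rooted_at F i j \<longleftrightarrow> root_of F i = j"
  unfolding in_tree_rooted_at_def using root_of_eqI[of a F j i] root_of[of a F i]
  by (auto simp: is_root_def)

text \<open>Maximum out-forests are the forests of maximum size, so the normalized matrix of maximum
  out-forests is the normalized forest matrix of that size.\<close>

lemma Jbar_forest_matrix:
  "Jbar a = (1 / forest_weight a (max_forest_size a)) *\<^sub>R forest_matrix a (max_forest_size a)"
proof -
  let ?\<nu> = "max_forest_size a"
  have max: "max_out_forests a = forests_of_size a ?\<nu>"
    unfolding max_out_forests_def forests_of_size_def max_forest_size_def out_forest_iff_forest ..
  have "(\<Sum>F\<in>{F\<in>max_out_forests a. in_tree_rooted_at F i j}. subgraph_weight a F)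
      = rooted_weight a ?\<nu> i j" for i j
    unfolding max rooted_weight_def sum.inter_filter[OF finite]
    by (rule sum.cong) (auto simp: forests_of_size_def in_tree_rooted_at_iff root_indicator_def)
  then show ?thesis
    by (simp add: Jbar_def vec_eq_iff forest_matrix_def forest_weight_def max)
qed

text \<open>The two algebraic properties of Jbar needed for the Cesaro limit:
  L Jbar = 0, and I - Jbar lies in the column space of L.\<close>

lemma kirchhoff_Jbar:
  assumes "weighted_digraph a" shows "kirchhoff a ** Jbar a = 0"
proof -
  have "forest_matrix a (Suc (max_forest_size a)) = 0"
    "forest_weight a (Suc (max_forest_size a)) = 0"
    by (simp_all add: forest_matrix_def rooted_weight_def forest_weight_def no_larger_forests
        vec_eq_iff)
  then show ?thesis
    unfolding Jbar_forest_matrix matrix_scalar_ac scalar_matrix_assoc[symmetric]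
    using kirchhoff_forest_matrix[OF assms] by simp
qed

lemma Jbar_complement:
  assumes "weighted_digraph a" shows "\<exists>X. mat 1 - Jbar a = kirchhoff a ** X"
proof (cases "max_forest_size a")
  case 0
  then have "Jbar a = mat 1"
    unfolding Jbar_forest_matrix by (simp add: forest_matrix_0 forest_weight_0)
  then show ?thesis by (intro exI[of _ 0]) simp
next
  case (Suc m)
  let ?s = "forest_weight a (max_forest_size a)"
  have "?s \<noteq> 0" using forest_weight_max_pos[of a] by simp
  then have "kirchhoff a ** ((1 / ?s) *\<^sub>R forest_matrix a m) = mat 1 - Jbar a"
    unfolding matrix_scalar_ac scalar_matrix_assoc[symmetric] kirchhoff_forest_matrix[OF assms]
      Jbar_forest_matrix Suc[symmetric]
    by (simp add: scaleR_diff_right)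
  then show ?thesis by metis
qed

lemma matrix_diff_ldistrib: "(A::'a::ring_1^'n::finite^'m) ** (B - C) = A ** B - A ** C"
  by (simp add: matrix_matrix_mult_def vec_eq_iff sum_subtractf algebra_simps)

lemma matrix_diff_rdistrib: "((B::'a::ring_1^'n::finite^'m) - C) ** A = B ** A - C ** A"
  by (simp add: matrix_matrix_mult_def vec_eq_iff sum_subtractf algebra_simps)

lemma matpow_fixed: "P ** J = J \<Longrightarrow> matpow P k ** J = J"
  by (induction k) (simp_all add: matrix_mul_assoc[symmetric])

lemma matpow_row_stochastic:
  assumes "row_stochastic P" shows "row_stochastic (matpow P k)"
proof (induction k)
  case 0
  show ?case by (simp add: row_stochastic_def mat_def sum.delta)
next
  case (Suc k)
  let ?M = "matpow P k"
  have P: "\<forall>i j. P $ i $ j \<ge> 0" "\<forall>i. (\<Sum>j\<in>UNIV. P $ i $ j) = 1"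
    using assms by (auto simp: row_stochastic_def)
  have M: "\<forall>i j. ?M $ i $ j \<ge> 0" "\<forall>i. (\<Sum>j\<in>UNIV. ?M $ i $ j) = 1"
    using Suc by (auto simp: row_stochastic_def)
  have "(\<Sum>j\<in>UNIV. (?M ** P) $ i $ j) = (\<Sum>l\<in>UNIV. ?M $ i $ l * (\<Sum>j\<in>UNIV. P $ l $ j))" for i
    by (simp add: matrix_matrix_mult_def sum_distrib_left) (rule sum.swap)
  then show ?case using P M by (simp add: row_stochastic_def matrix_matrix_mult_def sum_nonneg)
qed

lemma row_stochastic_entry_bounds:
  assumes "row_stochastic P" shows "0 \<le> P $ i $ j \<and> P $ i $ j \<le> 1"
proof -
  have "\<forall>i j. P $ i $ j \<ge> 0" "(\<Sum>j\<in>UNIV. P $ i $ j) = 1"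
    using assms by (auto simp: row_stochastic_def)
  moreover from this have "P $ i $ j \<le> (\<Sum>j\<in>UNIV. P $ i $ j)"
    by (intro member_le_sum) auto
  ultimately show ?thesis by simp
qed

text \<open>If P J = J and I - J = (I - P) Y, then P^k - J = (P^k - P^(k+1)) Y, and the partial sums of
  the powers telescope.\<close>

lemma matpow_partial_sum:
  fixes P J Y :: "real^'n::finite^'n"
  assumes PJ: "P ** J = J" and IJ: "mat 1 - J = (mat 1 - P) ** Y"
  shows "(\<Sum>i=1..m. matpow P i) = real m *\<^sub>R J + (P - matpow P (Suc m)) ** Y"
proof (induction m)
  case (Suc m)
  have step: "matpow P k = J + (matpow P k - matpow P (Suc k)) ** Y" for k
  proof -
    have "matpow P k - J = matpow P k ** (mat 1 - J)"
      using matpow_fixed[OF PJ] by (simp add: matrix_diff_ldistrib)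
    also have "\<dots> = (matpow P k - matpow P (Suc k)) ** Y"
      by (simp add: IJ matrix_mul_assoc matrix_diff_ldistrib)
    finally show ?thesis by (simp add: algebra_simps)
  qed
  have "(\<Sum>i=1..Suc m. matpow P i) = (\<Sum>i=1..m. matpow P i) + matpow P (Suc m)" by simp
  also have "\<dots> = real m *\<^sub>R J + (P - matpow P (Suc m)) ** Y
      + (J + (matpow P (Suc m) - matpow P (Suc (Suc m))) ** Y)"
    using Suc step[of "Suc m"] by simp
  also have "\<dots> = real (Suc m) *\<^sub>R J + (P - matpow P (Suc (Suc m))) ** Y"
    by (simp add: matrix_diff_rdistrib algebra_simps)
  finally show ?case .
qed simp

lemma bounded_over_m_tendsto_zero:
  fixes M :: "nat \<Rightarrow> real^'n::finite^'k::finite"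
  assumes "\<And>m i j. \<bar>M m $ i $ j\<bar> \<le> B i j"
  shows "(\<lambda>m. (1 / real m) *\<^sub>R M m) \<longlonglongrightarrow> 0"
proof (intro vec_tendstoI)
  fix i j
  have "(\<lambda>m. ((1 / real m) *\<^sub>R M m) $ i $ j) \<longlonglongrightarrow> 0"
  proof (rule Lim_null_comparison)
    show "\<forall>\<^sub>F m in sequentially. norm (((1 / real m) *\<^sub>R M m) $ i $ j) \<le> B i j * (1 / real m)"
      using assms by (intro always_eventually allI) (simp add: abs_mult divide_right_mono)
    show "(\<lambda>m. B i j * (1 / real m)) \<longlonglongrightarrow> 0"
      using tendsto_mult_right_zero[OF lim_1_over_n] by simp
  qed
  then show "(\<lambda>m. ((1 / real m) *\<^sub>R M m) $ i $ j) \<longlonglongrightarrow> (0 :: real^'n^'k) $ i $ j" by simp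
qed

lemma cesaro_limit:
  fixes P J Y :: "real^'n::finite^'n"
  assumes st: "row_stochastic P" and PJ: "P ** J = J" and IJ: "mat 1 - J = (mat 1 - P) ** Y"
  shows "(\<lambda>m. (1 / real m) *\<^sub>R (\<Sum>i=1..m. matpow P i)) \<longlonglongrightarrow> J"
proof -
  let ?D = "\<lambda>m. (P - matpow P (Suc m)) ** Y"
  have bound: "\<bar>?D m $ i $ j\<bar> \<le> (\<Sum>l\<in>UNIV. \<bar>Y $ l $ j\<bar>)" for m i j
  proof -
    have "\<bar>P $ i $ l - matpow P (Suc m) $ i $ l\<bar> \<le> 1" for l
      using row_stochastic_entry_bounds[OF st, of i l]
        row_stochastic_entry_bounds[OF matpow_row_stochastic[OF st], of "Suc m" i l] by linarith
    then have "\<bar>(P $ i $ l - matpow P (Suc m) $ i $ l) * Y $ l $ j\<bar> \<le> \<bar>Y $ l $ j\<bar>" for l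
      by (simp add: abs_mult mult_left_le_one_le)
    then show ?thesis unfolding matrix_matrix_mult_def
      by (simp add: order_trans[OF sum_abs] sum_mono)
  qed
  have "(\<lambda>m. J + (1 / real m) *\<^sub>R ?D m) \<longlonglongrightarrow> J + 0"
    by (intro tendsto_add tendsto_const bounded_over_m_tendsto_zero[OF bound])
  moreover have "\<forall>\<^sub>F m in sequentially.
      J + (1 / real m) *\<^sub>R ?D m = (1 / real m) *\<^sub>R (\<Sum>i=1..m. matpow P i)"
    by (rule eventually_sequentiallyI[of 1])
      (simp only: matpow_partial_sum[OF PJ IJ], simp add: scaleR_add_right)
  ultimately show ?thesis by (simp add: Lim_transform_eventually)
qed

theorem proposition8:
  fixes a :: "'n::finite \<Rightarrow> 'n \<Rightarrow> real" and \<epsilon> :: real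
  assumes "weighted_digraph a"
    and "\<epsilon> > 0"
    and "row_stochastic (mat 1 - \<epsilon> *\<^sub>R kirchhoff a)"
  shows "(\<lambda>m. (1 / real m) *\<^sub>R (\<Sum>i=1..m. matpow (mat 1 - \<epsilon> *\<^sub>R kirchhoff a) i))
           \<longlonglongrightarrow> Jbar a"
proof -
  let ?P = "mat 1 - \<epsilon> *\<^sub>R kirchhoff a"
  have fixed: "?P ** Jbar a = Jbar a"
    using kirchhoff_Jbar[OF assms(1)]
    by (simp add: matrix_diff_rdistrib scalar_matrix_assoc[symmetric])
  obtain X where "mat 1 - Jbar a = kirchhoff a ** X" using Jbar_complement[OF assms(1)] by blast
  then have "mat 1 - Jbar a = (mat 1 - ?P) ** ((1 / \<epsilon>) *\<^sub>R X)"
    using assms(2) by (simp add: matrix_scalar_ac scalar_matrix_assoc[symmetric])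
  then show ?thesis by (rule cesaro_limit[OF assms(3) fixed])
qed

end
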